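(* Let $\mu:[0,1)\to(0,\infty)$ be decreasing and continuous with $\lim_{r\to1^-}\mu(r)=0$, and suppose there is $B>0$ with $\mu(1-d/2)\ge B\mu(1-d)$ for all $d\in(0,1]$. Suppose moreover that for every $q>1$ there exist $A(q)>1$ and $y_0$ such that for all $y>y_0$ and $x>qy$ one has $\mu(1-1/y)>A(q)\,\mu(1-1/x)$. Let $u(z)=\operatorname{Re}\sum_k a_{n_k}z^{n_k}$ be a Hadamard gap series ($n_k$ positive integers, $n_{k+1}\ge\lambda n_k$, $\lambda>1$). If $\sup_k n_k|a_{n_k}|\,\mu(1-1/n_k)<\infty$, then $u\in\mathcal{B}_\mu$.
   Context: The Bloch-type space $\mathcal{B}_\mu$ is the set of harmonic functions $u$ on the unit disk $\mathbb{D}$ with $\|u\|_{\mathcal{B}_\mu}=\sup_{z\in\mathbb{D}}\big(|u(0)|+\mu(|z|)\,|\nabla u(z)|\big)<\infty$. *)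

theory Defs
  imports "HOL-Analysis.Analysis"
begin

definition dx :: "(complex \<Rightarrow> real) \<Rightarrow> complex \<Rightarrow> real" where
  "dx u z = deriv (\<lambda>t::real. u (z + of_real t)) 0"

definition dy :: "(complex \<Rightarrow> real) \<Rightarrow> complex \<Rightarrow> real" where
  "dy u z = deriv (\<lambda>t::real. u (z + \<i> * of_real t)) 0"

definition harmonic_on :: "complex set \<Rightarrow> (complex \<Rightarrow> real) \<Rightarrow> bool" where
  "harmonic_on S u \<longleftrightarrow> open S \<and>
     (\<exists>ux uy uxx uxy uyx uyy. \<forall>z\<in>S.
        ((\<lambda>t. u (z + of_real t)) has_real_derivative ux z) (at 0) \<and>
        ((\<lambda>t. u (z + \<i> * of_real t)) has_real_derivative uy z) (at 0) \<and>
        ((\<lambda>t. ux (z + of_real t)) has_real_derivative uxx z) (at 0) \<and>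
        ((\<lambda>t. ux (z + \<i> * of_real t)) has_real_derivative uxy z) (at 0) \<and>
        ((\<lambda>t. uy (z + of_real t)) has_real_derivative uyx z) (at 0) \<and>
        ((\<lambda>t. uy (z + \<i> * of_real t)) has_real_derivative uyy z) (at 0) \<and>
        isCont uxx z \<and> isCont uxy z \<and> isCont uyx z \<and> isCont uyy z \<and>
        uxx z + uyy z = 0)"

definition grad_norm :: "(complex \<Rightarrow> real) \<Rightarrow> complex \<Rightarrow> real" where
  "grad_norm u z = sqrt ((dx u z)\<^sup>2 + (dy u z)\<^sup>2)"

definition bloch_mu :: "(real \<Rightarrow> real) \<Rightarrow> (complex \<Rightarrow> real) set" where
  "bloch_mu \<mu> = {u. harmonic_on (ball 0 1) u \<and>
      (\<exists>C. \<forall>z\<in>ball 0 1. \<bar>u 0\<bar> + \<mu> (cmod z) * grad_norm u z \<le> C)}"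

end

theory Submission
  imports Defs "HOL-Complex_Analysis.Cauchy_Integral_Formula"
begin

(*
  Write phi(x) = 1 / mu(1 - 1/x) for the reciprocal weight and F(z) = sum_k a_k z^(n_k).
  Since Re F is harmonic with |grad Re F| = |F'|, membership of Re F in B_mu reduces to
      sum_k n_k |a_k| r^(n_k - 1) <= C / mu(r)    (1/2 <= r < 1),
  and by the coefficient hypothesis n_k |a_k| <= M phi(n_k) it suffices to bound
  sum_k phi(n_k) r^(n_k - 1) by C phi(N), where N = 1/(1 - r).
  The frequencies n_k <= N contribute at most (k1 + A/(A-1)) phi(N): along the gap sequence
  phi grows geometrically (hypothesis on A(q)), so this sum is dominated by its last term.
  The frequencies n_k > N contribute a geometric series: the doubling condition gives
  polynomial growth phi(y) <= (2y/x)^m phi(x), which is beaten by r^(n_k) <= exp(-n_k/N)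
  and the lacunarity n_(k0+i) >= lam^i N.
*)

text \<open>A single term of the exponential series bounds it from below.\<close>
lemma exp_ge_power_div_fact:
  fixes x :: real
  assumes "0 \<le> x"
  shows "x ^ m / fact m \<le> exp x"
proof -
  have "summable (\<lambda>k. x ^ k / fact k)"
    using summable_exp_generic[of x] by (simp add: divide_inverse ac_simps)
  then have "(\<Sum>k\<in>{m}. x ^ k / fact k) \<le> (\<Sum>k. x ^ k / fact k)"
    by (rule sum_le_suminf) (auto simp: assms)
  then show ?thesis by (simp add: exp_def divide_inverse ac_simps)
qed

lemma power_times_exp_bound:
  fixes t :: real
  assumes "0 \<le> t"
  shows "t ^ m * exp (-t) \<le> 2 ^ m * fact m * exp (-t/2)"
proof -
  have "(t/2) ^ m \<le> fact m * exp (t/2)"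
    using exp_ge_power_div_fact[of "t/2" m] assms by (simp add: field_simps)
  then have "t ^ m \<le> 2 ^ m * fact m * exp (t/2)"
    by (simp add: power_divide field_simps)
  then have "t ^ m * exp (-t) \<le> 2 ^ m * fact m * exp (t/2) * exp (-t)"
    by (rule mult_right_mono) simp
  also have "\<dots> = 2 ^ m * fact m * exp (-t/2)"
    by (simp add: mult.assoc exp_add[symmetric])
  finally show ?thesis .
qed

lemma power_le_two_exp:
  fixes r :: real and p :: nat
  assumes "1/2 \<le> r" "r < 1" "0 < p"
  shows "r ^ (p - 1) \<le> 2 * exp (- ((1 - r) * p))"
proof -
  have "r ^ (p - 1) \<le> 2 * (r * r ^ (p - 1))"
    using assms(1) by (simp add: mult.assoc[symmetric])
  also have "r * r ^ (p - 1) = r ^ p"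
    using assms(3) by (simp add: power_eq_if)
  also have "r ^ p \<le> exp (- (1 - r)) ^ p"
    using assms exp_ge_add_one_self[of "- (1 - r)"] by (intro power_mono) auto
  also have "\<dots> = exp (- ((1 - r) * p))"
    by (simp add: exp_of_nat_mult[symmetric] algebra_simps)
  finally show ?thesis by simp
qed

lemma geometric_partial_sum_le:
  fixes \<rho> :: real
  assumes "0 \<le> \<rho>" "\<rho> < 1"
  shows "(\<Sum>i<j. \<rho> ^ i) \<le> 1 / (1 - \<rho>)"
proof -
  have "(\<Sum>i<j. \<rho> ^ i) \<le> (\<Sum>i. \<rho> ^ i)"
    using assms by (intro sum_le_suminf summable_geometric) auto
  also have "\<dots> = 1 / (1 - \<rho>)"
    using assms by (intro suminf_geometric) simp
  finally show ?thesis .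
qed

lemma doubling_poly_growth:
  fixes f :: "real \<Rightarrow> real"
  assumes pos: "\<And>x. 1 \<le> x \<Longrightarrow> 0 < f x"
    and mono: "\<And>x y. 1 \<le> x \<Longrightarrow> x \<le> y \<Longrightarrow> f x \<le> f y"
    and doubling: "\<And>y. 2 \<le> y \<Longrightarrow> f y \<le> K * f (y/2)"
    and K: "K \<le> 2 ^ m"
    and xy: "1 \<le> x" "x \<le> y"
  shows "f y \<le> (2*y/x) ^ m * f x"
proof -
  have K_pos: "0 < K"
  proof -
    have "0 < K * f 1" using doubling[of 2] pos[of 2] by simp
    then show ?thesis using pos[of 1] by (simp add: zero_less_mult_iff)
  qed
  obtain j :: nat where "y/x < 2 ^ j"
    using real_arch_pow[of 2 "y/x"] by auto
  then have "y \<le> 2 ^ j * x" using xy by (simp add: field_simps)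
  then show ?thesis using xy(2)
  proof (induction j arbitrary: y)
    case 0
    then have "y = x" by simp
    have "1 * f x \<le> 2 ^ m * f x"
      using pos[of x] xy by (intro mult_right_mono) auto
    then show ?case using \<open>y = x\<close> xy by simp
  next
    case (Suc j)
    show ?case
    proof (cases "y \<le> 2 * x")
      case True
      have "f y \<le> f (2 * x)" using mono True xy Suc.prems by simp
      also have "\<dots> \<le> K * f x" using doubling[of "2*x"] xy by simp
      also have "\<dots> \<le> 2 ^ m * f x" using K pos[of x] xy by (intro mult_right_mono) auto
      also have "\<dots> \<le> (2*y/x) ^ m * f x"
        using Suc.prems xy pos[of x] by (intro mult_right_mono power_mono) (auto simp: field_simps)
      finally show ?thesis .
    next
      case False
      have "f (y/2) \<le> (2*(y/2)/x) ^ m * f x"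
        using Suc.IH[of "y/2"] Suc.prems False by simp
      then have "f y \<le> K * ((y/x) ^ m * f x)"
        using doubling[of y] False xy K_pos by (auto intro: order_trans mult_left_mono)
      also have "\<dots> \<le> 2 ^ m * ((y/x) ^ m * f x)"
        using K pos[of x] xy Suc.prems by (intro mult_right_mono) auto
      also have "\<dots> = (2*y/x) ^ m * f x"
        by (simp add: power_mult_distrib[symmetric] times_divide_eq_right)
      finally show ?thesis .
    qed
  qed
qed

lemma geometric_growth_sum:
  fixes f :: "nat \<Rightarrow> real"
  assumes A: "A > 1" and growth: "\<And>k. k0 \<le> k \<Longrightarrow> A * f k \<le> f (Suc k)" and "0 \<le> f k0"
  shows "(\<Sum>k\<in>{k0..k0 + j}. f k) \<le> A/(A-1) * f (k0 + j)"
proof (induction j)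
  case 0
  have "1 * f k0 \<le> A/(A-1) * f k0"
    using A \<open>0 \<le> f k0\<close> by (intro mult_right_mono) auto
  then show ?case by simp
next
  case (Suc j)
  have "(\<Sum>k\<in>{k0..k0 + Suc j}. f k) = (\<Sum>k\<in>{k0..k0 + j}. f k) + f (k0 + Suc j)"
    by simp
  also have "\<dots> \<le> (A * f (k0 + j))/(A-1) + f (k0 + Suc j)"
    using Suc.IH by simp
  also have "(A * f (k0 + j))/(A-1) \<le> f (k0 + Suc j)/(A-1)"
    using growth[of "k0 + j"] A by (intro divide_right_mono) auto
  also have "f (k0 + Suc j)/(A-1) + f (k0 + Suc j) = A/(A-1) * f (k0 + Suc j)"
    using A by (simp add: field_simps)
  finally show ?case by simp
qed

lemma head_sum_bound:
  fixes f :: "nat \<Rightarrow> real"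
  assumes nonneg: "\<And>k. 0 \<le> f k" and A: "A > 1"
    and growth: "\<And>k. k1 \<le> k \<Longrightarrow> A * f k \<le> f (Suc k)"
    and below: "\<And>k. k < k0 \<Longrightarrow> f k \<le> F" and "0 \<le> F"
  shows "(\<Sum>k<k0. f k) \<le> (real k1 + A/(A-1)) * F"
proof (cases "k0 \<le> k1")
  case True
  have "(\<Sum>k<k0. f k) \<le> real k0 * F"
    using sum_mono[of "{..<k0}" f "\<lambda>_. F"] below by simp
  also have "\<dots> \<le> (real k1 + A/(A-1)) * F"
    using True A \<open>0 \<le> F\<close> by (intro mult_right_mono) (auto intro: add_increasing2)
  finally show ?thesis .
next
  case False
  then obtain j where k0: "k0 = Suc (k1 + j)"
    by (metis add_Suc_right less_imp_Suc_add not_le)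
  have split: "{..<k0} = {..<k1} \<union> {k1..k1 + j}" and disj: "{..<k1} \<inter> {k1..k1 + j} = {}"
    using k0 by auto
  have "(\<Sum>k<k0. f k) = (\<Sum>k<k1. f k) + (\<Sum>k\<in>{k1..k1 + j}. f k)"
    unfolding split by (rule sum.union_disjoint) (use disj in auto)
  also have "(\<Sum>k<k1. f k) \<le> real k1 * F"
    using sum_mono[of "{..<k1}" f "\<lambda>_. F"] below k0 by force
  also have "(\<Sum>k\<in>{k1..k1 + j}. f k) \<le> A/(A-1) * f (k1 + j)"
    using geometric_growth_sum[OF A growth nonneg[of k1]] .
  also have "\<dots> \<le> A/(A-1) * F"
    using below[of "k1 + j"] k0 A by (intro mult_left_mono) auto
  finally show ?thesis by (simp add: algebra_simps)
qed

lemma lacunary_strict_mono: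
  fixes n :: "nat \<Rightarrow> nat"
  assumes "\<And>k. 0 < n k" "lam > 1" "\<And>k. lam * real (n k) \<le> real (n (Suc k))"
  shows "strict_mono n"
  unfolding strict_mono_Suc_iff
proof
  fix k
  have "real (n k) < lam * real (n k)" using assms(1)[of k] assms(2) by simp
  also have "\<dots> \<le> real (n (Suc k))" by (rule assms(3))
  finally show "n k < n (Suc k)" by simp
qed

lemma lacunary_power_growth:
  fixes n :: "nat \<Rightarrow> nat"
  assumes "0 \<le> lam" "\<And>k. lam * real (n k) \<le> real (n (Suc k))"
  shows "lam ^ i * real (n j) \<le> real (n (j + i))"
proof (induction i)
  case (Suc i)
  have "lam ^ Suc i * real (n j) = lam * (lam ^ i * real (n j))" by simp
  also have "\<dots> \<le> lam * real (n (j + i))" using Suc.IH assms(1) by (rule mult_left_mono)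
  also have "\<dots> \<le> real (n (j + Suc i))" using assms(2) by simp
  finally show ?case .
qed simp

lemma strict_mono_threshold:
  fixes n :: "nat \<Rightarrow> nat" and N :: real
  assumes "strict_mono n"
  obtains k0 where "\<And>k. k < k0 \<Longrightarrow> real (n k) \<le> N" and "\<And>k. k0 \<le> k \<Longrightarrow> N < real (n k)"
proof
  have exceeds: "N < real (n (Suc (nat \<lceil>N\<rceil>)))"
    using strict_mono_imp_increasing[OF assms, of "Suc (nat \<lceil>N\<rceil>)"] real_nat_ceiling_ge[of N]
    by linarith
  define k0 where "k0 = (LEAST k. N < real (n k))"
  show "real (n k) \<le> N" if "k < k0" for k
    using not_less_Least[of k "\<lambda>k. N < real (n k)"] that unfolding k0_def by simp
  show "N < real (n k)" if "k0 \<le> k" for k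
  proof -
    have "N < real (n k0)" unfolding k0_def by (rule LeastI[of "\<lambda>k. N < real (n k)", OF exceeds])
    also have "\<dots> \<le> real (n k)" using strict_mono_leD[OF assms that] by simp
    finally show ?thesis .
  qed
qed

lemma tail_term_bound:
  fixes \<phi> :: "real \<Rightarrow> real" and r lam :: real and p i :: nat
  assumes pos: "\<And>x. 1 \<le> x \<Longrightarrow> 0 < \<phi> x"
    and growth: "\<And>x y. 1 \<le> x \<Longrightarrow> x \<le> y \<Longrightarrow> \<phi> y \<le> (2*y/x) ^ m * \<phi> x"
    and r: "1/2 \<le> r" "r < 1" and lam: "1 \<le> lam" and p: "lam ^ i / (1 - r) \<le> real p"
  shows "\<phi> p * r ^ (p - 1) \<le> 2 * 4 ^ m * fact m * exp (-(lam-1)/2) ^ i * \<phi> (1/(1-r))"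
proof -
  define N where "N = 1/(1-r)"
  define t where "t = (1 - r) * real p"
  have N2: "2 \<le> N" using r by (simp add: N_def field_simps)
  have lam_i: "1 + real i * (lam - 1) \<le> lam ^ i"
    using Bernoulli_inequality[of "lam - 1" i] lam by simp
  have t: "lam ^ i \<le> t" using p r by (simp add: t_def field_simps)
  then have t_nonneg: "0 \<le> t" using one_le_power[OF lam, of i] by linarith
  have "N \<le> lam ^ i / (1 - r)"
    using lam r by (simp add: N_def divide_right_mono)
  with p have pN: "N \<le> real p" by simp
  have phi_p: "\<phi> p \<le> (2*t) ^ m * \<phi> N"
    using growth[of N "real p"] N2 pN r by (simp add: N_def t_def field_simps)
  have r_p: "r ^ (p - 1) \<le> 2 * exp (-t)"
    unfolding t_def using power_le_two_exp[of r p] r pN N2 by linarith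
  have exp_t: "exp (-t/2) \<le> exp (-(lam-1)/2) ^ i"
    using lam_i t lam by (simp add: exp_of_nat_mult[symmetric] field_simps)
  have "\<phi> p * r ^ (p - 1) \<le> ((2*t) ^ m * \<phi> N) * (2 * exp (-t))"
    using phi_p r_p pos[of p] pN N2 r by (intro mult_mono) auto
  also have "\<dots> = 2 * 2 ^ m * \<phi> N * (t ^ m * exp (-t))"
    by (simp add: power_mult_distrib)
  also have "\<dots> \<le> 2 * 2 ^ m * \<phi> N * (2 ^ m * fact m * exp (-t/2))"
    using power_times_exp_bound[OF t_nonneg] pos[of N] N2 by (intro mult_left_mono) auto
  also have "\<dots> \<le> 2 * 2 ^ m * \<phi> N * (2 ^ m * fact m * exp (-(lam-1)/2) ^ i)"
    using exp_t pos[of N] N2 by (intro mult_left_mono) auto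
  also have "\<dots> = 2 * 4 ^ m * fact m * exp (-(lam-1)/2) ^ i * \<phi> N"
    by (simp add: power_mult_distrib[symmetric])
  finally show ?thesis by (simp add: N_def)
qed

text \<open>Frequencies beyond N = 1/(1-r) satisfy n (k0 + i) \<ge> lam^i N by lacunarity, so their
  terms are dominated by a convergent geometric series.\<close>
lemma tail_sum_bound:
  fixes \<phi> :: "real \<Rightarrow> real" and n :: "nat \<Rightarrow> nat" and lam r :: real
  assumes pos: "\<And>x. 1 \<le> x \<Longrightarrow> 0 < \<phi> x"
    and growth: "\<And>x y. 1 \<le> x \<Longrightarrow> x \<le> y \<Longrightarrow> \<phi> y \<le> (2*y/x) ^ m * \<phi> x"
    and lam: "lam > 1" and gap: "\<And>k. lam * real (n k) \<le> real (n (Suc k))"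
    and r: "1/2 \<le> r" "r < 1" and above: "1/(1-r) < real (n k0)"
  shows "(\<Sum>i<j. \<phi> (n (k0 + i)) * r ^ (n (k0 + i) - 1))
           \<le> 2 * 4 ^ m * fact m / (1 - exp (-(lam-1)/2)) * \<phi> (1/(1-r))"
proof -
  define \<rho> where "\<rho> = exp (-(lam-1)/2)"
  define c :: real where "c = 2 * 4 ^ m * fact m"
  define N where "N = 1/(1-r)"
  have \<rho>: "0 \<le> \<rho>" "\<rho> < 1" using lam by (auto simp: \<rho>_def)
  have phi_N: "0 < \<phi> N" using r pos[of N] by (auto simp: N_def field_simps)
  have "\<phi> (n (k0 + i)) * r ^ (n (k0 + i) - 1) \<le> c * \<phi> N * \<rho> ^ i" for i
  proof -
    have "lam ^ i * N \<le> lam ^ i * real (n k0)"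
      using above lam by (intro mult_left_mono) (auto simp: N_def)
    also have "\<dots> \<le> real (n (k0 + i))"
      using lam gap by (intro lacunary_power_growth) auto
    finally have "lam ^ i / (1 - r) \<le> real (n (k0 + i))" by (simp add: N_def)
    then show ?thesis unfolding c_def \<rho>_def N_def
      using tail_term_bound[OF pos growth r] lam by (simp add: ac_simps)
  qed
  then have "(\<Sum>i<j. \<phi> (n (k0 + i)) * r ^ (n (k0 + i) - 1)) \<le> (\<Sum>i<j. c * \<phi> N * \<rho> ^ i)"
    by (rule sum_mono)
  also have "\<dots> = c * \<phi> N * (\<Sum>i<j. \<rho> ^ i)"
    by (rule sum_distrib_left[symmetric])
  also have "\<dots> \<le> c * \<phi> N * (1 / (1 - \<rho>))"
    using geometric_partial_sum_le[OF \<rho>] phi_N by (intro mult_left_mono) (auto simp: c_def)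
  finally show ?thesis by (simp add: c_def \<rho>_def N_def)
qed

text \<open>The central estimate for an abstract weight phi: splitting the frequencies at N = 1/(1-r),
  both the head and the tail are O(phi(N)).\<close>
lemma lacunary_weighted_sum_bound:
  fixes \<phi> :: "real \<Rightarrow> real" and n :: "nat \<Rightarrow> nat" and lam A :: real and k1 m :: nat
  assumes pos: "\<And>x. 1 \<le> x \<Longrightarrow> 0 < \<phi> x"
    and mono: "\<And>x y. 1 \<le> x \<Longrightarrow> x \<le> y \<Longrightarrow> \<phi> x \<le> \<phi> y"
    and growth: "\<And>x y. 1 \<le> x \<Longrightarrow> x \<le> y \<Longrightarrow> \<phi> y \<le> (2*y/x) ^ m * \<phi> x"
    and n_pos: "\<And>k. 0 < n k" and lam: "lam > 1"
    and gap: "\<And>k. lam * real (n k) \<le> real (n (Suc k))"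
    and A: "A > 1" and chain: "\<And>k. k1 \<le> k \<Longrightarrow> A * \<phi> (n k) \<le> \<phi> (n (Suc k))"
  shows "\<exists>C. \<forall>r K. 1/2 \<le> r \<longrightarrow> r < 1 \<longrightarrow>
           (\<Sum>k<K. \<phi> (n k) * r ^ (n k - 1)) \<le> C * \<phi> (1/(1-r))"
proof -
  define C_tail :: real where "C_tail = 2 * 4 ^ m * fact m / (1 - exp (-(lam-1)/2))"
  have strict: "strict_mono n" using n_pos lam gap by (rule lacunary_strict_mono)
  have n1: "1 \<le> real (n k)" for k using n_pos[of k] by linarith
  show ?thesis
  proof (intro exI allI impI)
    fix r :: real and K :: nat assume r: "1/2 \<le> r" "r < 1"
    define N where "N = 1/(1-r)"
    define T where "T k = \<phi> (n k) * r ^ (n k - 1)" for k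
    have phi_N: "0 < \<phi> N" using r pos[of N] by (auto simp: N_def field_simps)
    have T_nonneg: "0 \<le> T k" for k using pos[OF n1[of k]] r by (simp add: T_def)
    obtain k0 where below: "\<And>k. k < k0 \<Longrightarrow> real (n k) \<le> N"
      and above: "\<And>k. k0 \<le> k \<Longrightarrow> N < real (n k)"
      using strict_mono_threshold[OF strict] by blast
    have "(\<Sum>k<k0. T k) \<le> (\<Sum>k<k0. \<phi> (n k))"
      using r pos[OF n1] by (intro sum_mono) (auto simp: T_def intro: mult_left_le power_le_one)
    also have "\<dots> \<le> (real k1 + A/(A-1)) * \<phi> N"
      using pos[OF n1] A chain mono[OF n1 below] phi_N
      by (intro head_sum_bound) (auto intro: less_imp_le)
    finally have head: "(\<Sum>k<k0. T k) \<le> (real k1 + A/(A-1)) * \<phi> N" .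
    have tail: "(\<Sum>i<j. T (k0 + i)) \<le> C_tail * \<phi> N" for j
      unfolding T_def C_tail_def N_def
      using tail_sum_bound[where n = n, OF pos growth lam gap r] above[of k0] by (simp add: N_def)
    have split: "(\<Sum>k<k0 + j. T k) = (\<Sum>k<k0. T k) + (\<Sum>i<j. T (k0 + i))" for j
      by (induction j) auto
    have "(\<Sum>k<K. T k) \<le> (\<Sum>k<k0 + (K - k0). T k)"
      using T_nonneg by (intro sum_mono2) auto
    also have "\<dots> = (\<Sum>k<k0. T k) + (\<Sum>i<K - k0. T (k0 + i))"
      by (rule split)
    also have "\<dots> \<le> (real k1 + A/(A-1) + C_tail) * \<phi> N"
      using head tail[of "K - k0"] by (simp add: distrib_right)
    finally show "(\<Sum>k<K. \<phi> (n k) * r ^ (n k - 1))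
                    \<le> (real k1 + A/(A-1) + C_tail) * \<phi> (1/(1-r))"
      by (simp add: T_def N_def)
  qed
qed

definition weight_recip :: "(real \<Rightarrow> real) \<Rightarrow> real \<Rightarrow> real" where
  "weight_recip \<mu> x = 1 / \<mu> (1 - 1/x)"

lemma weight_recip_pos:
  assumes mu_pos: "\<forall>r\<in>{0..<1}. \<mu> r > 0" and "1 \<le> x"
  shows "0 < weight_recip \<mu> x"
  using mu_pos assms(2) by (auto simp: weight_recip_def field_simps)

lemma weight_recip_mono:
  assumes mu_pos: "\<forall>r\<in>{0..<1}. \<mu> r > 0"
    and mu_decr: "\<forall>r s. 0 \<le> r \<and> r \<le> s \<and> s < 1 \<longrightarrow> \<mu> s \<le> \<mu> r"
    and xy: "1 \<le> x" "x \<le> y"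
  shows "weight_recip \<mu> x \<le> weight_recip \<mu> y"
proof -
  have "1/y \<le> 1/x" using xy by (simp add: frac_le)
  moreover have "0 \<le> 1 - 1/x" "1 - 1/y < 1" using xy by (auto simp: field_simps)
  ultimately have "\<mu> (1 - 1/y) \<le> \<mu> (1 - 1/x)" using mu_decr by auto
  moreover have "0 < \<mu> (1 - 1/y)" using mu_pos xy by (auto simp: field_simps)
  ultimately show ?thesis unfolding weight_recip_def by (intro frac_le) auto
qed

lemma weight_recip_doubling:
  assumes mu_pos: "\<forall>r\<in>{0..<1}. \<mu> r > 0" and B_pos: "B > 0"
    and mu_doubling: "\<forall>d\<in>{0<..1}. \<mu> (1 - d / 2) \<ge> B * \<mu> (1 - d)"
    and y: "2 \<le> y"
  shows "weight_recip \<mu> y \<le> (1/B) * weight_recip \<mu> (y/2)"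
proof -
  have "B * \<mu> (1 - 1/(y/2)) \<le> \<mu> (1 - 1/y)"
    using mu_doubling[rule_format, of "2/y"] y by simp
  moreover have "0 < \<mu> (1 - 1/(y/2))" "0 < \<mu> (1 - 1/y)"
    using mu_pos y by (auto simp: field_simps)
  ultimately show ?thesis
    using B_pos by (simp add: weight_recip_def field_simps)
qed

text \<open>The hypothesis on A(q), with q = (1 + lam)/2, makes phi grow geometrically along the gap sequence.\<close>
lemma weight_recip_lacunary_growth:
  fixes n :: "nat \<Rightarrow> nat"
  assumes mu_pos: "\<forall>r\<in>{0..<1}. \<mu> r > 0"
    and mu_A: "\<forall>q>1. \<exists>A>1. \<exists>y0. \<forall>y>y0. \<forall>x>q*y. \<mu> (1 - 1/y) > A * \<mu> (1 - 1/x)"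
    and n_pos: "\<And>k. 0 < n k" and lam: "lam > 1"
    and gap: "\<And>k. lam * real (n k) \<le> real (n (Suc k))"
  obtains A k1 where "A > 1" and "\<And>k. k1 \<le> k \<Longrightarrow> A * weight_recip \<mu> (n k) \<le> weight_recip \<mu> (n (Suc k))"
proof -
  have strict: "strict_mono n" using n_pos lam gap by (rule lacunary_strict_mono)
  have "(1 + lam)/2 > 1" using lam by simp
  with mu_A obtain A y0 where A: "A > 1"
    and Ay: "\<forall>y>y0. \<forall>x>(1 + lam)/2 * y. \<mu> (1 - 1/y) > A * \<mu> (1 - 1/x)"
    by blast
  have "A * weight_recip \<mu> (n k) \<le> weight_recip \<mu> (n (Suc k))" if k: "Suc (nat \<lceil>y0\<rceil>) \<le> k" for k
  proof -
    have "y0 < real k" using k real_nat_ceiling_ge[of y0] by linarith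
    also have "\<dots> \<le> real (n k)"
      using strict_mono_imp_increasing[OF strict] by simp
    finally have big: "y0 < real (n k)" .
    have "(1 + lam)/2 * real (n k) < lam * real (n k)" using lam n_pos[of k] by simp
    then have "\<mu> (1 - 1/real (n k)) > A * \<mu> (1 - 1/real (n (Suc k)))"
      using Ay big gap[of k] by simp
    moreover have "0 < \<mu> (1 - 1/real (n k))" "0 < \<mu> (1 - 1/real (n (Suc k)))"
      using mu_pos n_pos[of k] n_pos[of "Suc k"] by (auto simp: field_simps)
    ultimately show ?thesis by (simp add: weight_recip_def field_simps)
  qed
  with A show ?thesis using that by blast
qed

text \<open>Near the boundary the partial sums of the derivative series are O(1/mu(r)): the coefficient
  hypothesis gives n k * |a k| \<le> M * phi(n k), and phi satisfies the hypotheses of the central estimate.\<close>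
lemma gap_derivative_partial_sums:
  fixes \<mu> :: "real \<Rightarrow> real" and B lam :: real and n :: "nat \<Rightarrow> nat" and a :: "nat \<Rightarrow> complex"
  assumes mu_pos: "\<forall>r\<in>{0..<1}. \<mu> r > 0"
    and mu_decr: "\<forall>r s. 0 \<le> r \<and> r \<le> s \<and> s < 1 \<longrightarrow> \<mu> s \<le> \<mu> r"
    and B_pos: "B > 0"
    and mu_doubling: "\<forall>d\<in>{0<..1}. \<mu> (1 - d / 2) \<ge> B * \<mu> (1 - d)"
    and mu_A: "\<forall>q>1. \<exists>A>1. \<exists>y0. \<forall>y>y0. \<forall>x>q*y. \<mu> (1 - 1/y) > A * \<mu> (1 - 1/x)"
    and n_pos: "\<And>k. 0 < n k" and lam: "lam > 1"
    and gap: "\<And>k. lam * real (n k) \<le> real (n (Suc k))"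
    and coeff: "\<And>k. real (n k) * cmod (a k) * \<mu> (1 - 1 / real (n k)) \<le> M"
  shows "\<exists>C. \<forall>r K. 1/2 \<le> r \<longrightarrow> r < 1 \<longrightarrow>
           (\<Sum>k<K. real (n k) * cmod (a k) * r ^ (n k - 1)) \<le> C / \<mu> r"
proof -
  let ?\<phi> = "weight_recip \<mu>"
  have pos: "\<And>x. 1 \<le> x \<Longrightarrow> 0 < ?\<phi> x" using mu_pos by (rule weight_recip_pos)
  have mono: "\<And>x y. 1 \<le> x \<Longrightarrow> x \<le> y \<Longrightarrow> ?\<phi> x \<le> ?\<phi> y"
    using mu_pos mu_decr by (rule weight_recip_mono)
  obtain m :: nat where m: "1/B < 2 ^ m" using real_arch_pow[of 2 "1/B"] by auto
  have growth: "\<And>x y. 1 \<le> x \<Longrightarrow> x \<le> y \<Longrightarrow> ?\<phi> y \<le> (2*y/x) ^ m * ?\<phi> x"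
    by (rule doubling_poly_growth[of ?\<phi>, OF pos mono weight_recip_doubling[OF mu_pos B_pos mu_doubling]
          less_imp_le[OF m]])
  obtain A k1 where A: "A > 1" and chain: "\<And>k. k1 \<le> k \<Longrightarrow> A * ?\<phi> (n k) \<le> ?\<phi> (n (Suc k))"
    using weight_recip_lacunary_growth[where n = n, OF mu_pos mu_A n_pos lam gap] by blast
  obtain C where C: "\<And>r K. 1/2 \<le> r \<Longrightarrow> r < 1 \<Longrightarrow> (\<Sum>k<K. ?\<phi> (n k) * r ^ (n k - 1)) \<le> C * ?\<phi> (1/(1-r))"
    using lacunary_weighted_sum_bound[where n = n, OF pos mono growth n_pos lam gap A chain] by blast
  have mu_n: "0 < \<mu> (1 - 1 / real (n k))" for k
    using pos[of "n k"] n_pos[of k] by (simp add: weight_recip_def)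
  have "0 \<le> real (n 0) * cmod (a 0) * \<mu> (1 - 1 / real (n 0))"
    using mu_n[of 0] by simp
  then have M: "0 \<le> M" using coeff[of 0] by linarith
  have "(\<Sum>k<K. real (n k) * cmod (a k) * r ^ (n k - 1)) \<le> M * C / \<mu> r"
    if r: "1/2 \<le> r" "r < 1" for r K
  proof -
    have "real (n k) * cmod (a k) \<le> M * ?\<phi> (n k)" for k
      using coeff[of k] mu_n[of k] by (simp add: weight_recip_def field_simps)
    then have "(\<Sum>k<K. real (n k) * cmod (a k) * r ^ (n k - 1)) \<le> (\<Sum>k<K. M * (?\<phi> (n k) * r ^ (n k - 1)))"
      using r by (intro sum_mono) (simp add: mult.assoc[symmetric] mult_right_mono)
    also have "\<dots> \<le> M * (C * ?\<phi> (1/(1-r)))"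
      using C[OF r] M by (simp add: sum_distrib_left[symmetric] mult_left_mono)
    also have "?\<phi> (1/(1-r)) = 1 / \<mu> r" using r by (simp add: weight_recip_def)
    finally show ?thesis by simp
  qed
  then show ?thesis by blast
qed

text \<open>Extension of the bound from 1/2 \<le> r < 1 to the whole radius range, using monotonicity in r.\<close>
lemma weighted_series_bound:
  fixes T :: "real \<Rightarrow> nat \<Rightarrow> real" and \<mu> :: "real \<Rightarrow> real"
  assumes mu_pos: "\<forall>r\<in>{0..<1}. \<mu> r > 0"
    and mu_decr: "\<forall>r s. 0 \<le> r \<and> r \<le> s \<and> s < 1 \<longrightarrow> \<mu> s \<le> \<mu> r"
    and nonneg: "\<And>r k. 0 \<le> r \<Longrightarrow> 0 \<le> T r k"
    and mono: "\<And>r s k. 0 \<le> r \<Longrightarrow> r \<le> s \<Longrightarrow> T r k \<le> T s k"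
    and partial: "\<And>r K. 1/2 \<le> r \<Longrightarrow> r < 1 \<Longrightarrow> (\<Sum>k<K. T r k) \<le> C / \<mu> r"
  shows "\<exists>C'. \<forall>r. 0 \<le> r \<and> r < 1 \<longrightarrow> summable (T r) \<and> \<mu> r * suminf (T r) \<le> C'"
proof -
  have upper: "summable (T r) \<and> suminf (T r) \<le> C / \<mu> r" if "1/2 \<le> r" "r < 1" for r
  proof -
    have "summable (T r)"
      using that nonneg partial by (intro summableI_nonneg_bounded) auto
    then show ?thesis using suminf_le_const partial that by blast
  qed
  have "summable (T r) \<and> \<mu> r * suminf (T r) \<le> max C (\<mu> 0 * (C / \<mu> (1/2)))"
    if r: "0 \<le> r" "r < 1" for r
  proof (cases "1/2 \<le> r")
    case True
    have mu_r: "0 < \<mu> r" using mu_pos r by auto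
    from upper[OF True r(2)] have "summable (T r)" and "suminf (T r) \<le> C / \<mu> r" by auto
    then have "\<mu> r * suminf (T r) \<le> \<mu> r * (C / \<mu> r)"
      using mu_r by (intro mult_left_mono) auto
    with mu_r \<open>summable (T r)\<close> show ?thesis by simp
  next
    case False
    from upper[of "1/2"] have half: "summable (T (1/2))" "suminf (T (1/2)) \<le> C / \<mu> (1/2)"
      by auto
    have below_half: "T r k \<le> T (1/2) k" for k
      using mono[of r "1/2" k] r False by simp
    have summable: "summable (T r)"
      by (rule summable_comparison_test'[OF half(1)]) (use nonneg[OF r(1)] below_half in simp)
    have "\<mu> r \<le> \<mu> 0" using mu_decr r by simp
    moreover have "suminf (T r) \<le> suminf (T (1/2))"
      by (rule suminf_le[OF below_half summable half(1)])
    moreover have "0 \<le> \<mu> 0" using bspec[OF mu_pos, of 0] by simp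
    moreover have "0 \<le> suminf (T r)" by (rule suminf_nonneg[OF summable nonneg[OF r(1)]])
    ultimately have "\<mu> r * suminf (T r) \<le> \<mu> 0 * suminf (T (1/2))"
      by (rule mult_mono)
    also have "\<dots> \<le> \<mu> 0 * (C / \<mu> (1/2))"
      using half(2) \<open>0 \<le> \<mu> 0\<close> by (rule mult_left_mono)
    finally show ?thesis using summable by simp
  qed
  then show ?thesis by blast
qed

lemma gap_derivative_series_bound:
  fixes \<mu> :: "real \<Rightarrow> real" and B lam :: real and n :: "nat \<Rightarrow> nat" and a :: "nat \<Rightarrow> complex"
  assumes mu_pos: "\<forall>r\<in>{0..<1}. \<mu> r > 0"
    and mu_decr: "\<forall>r s. 0 \<le> r \<and> r \<le> s \<and> s < 1 \<longrightarrow> \<mu> s \<le> \<mu> r"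
    and B_pos: "B > 0"
    and mu_doubling: "\<forall>d\<in>{0<..1}. \<mu> (1 - d / 2) \<ge> B * \<mu> (1 - d)"
    and mu_A: "\<forall>q>1. \<exists>A>1. \<exists>y0. \<forall>y>y0. \<forall>x>q*y. \<mu> (1 - 1/y) > A * \<mu> (1 - 1/x)"
    and n_pos: "\<And>k. 0 < n k" and lam: "lam > 1"
    and gap: "\<And>k. lam * real (n k) \<le> real (n (Suc k))"
    and coeff: "\<And>k. real (n k) * cmod (a k) * \<mu> (1 - 1 / real (n k)) \<le> M"
  shows "\<exists>C. \<forall>r. 0 \<le> r \<and> r < 1 \<longrightarrow>
           summable (\<lambda>k. real (n k) * cmod (a k) * r ^ (n k - 1)) \<and>
           \<mu> r * (\<Sum>k. real (n k) * cmod (a k) * r ^ (n k - 1)) \<le> C"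
proof -
  define T where "T r k = real (n k) * cmod (a k) * r ^ (n k - 1)" for r k
  obtain C0 where partial: "\<And>r K. 1/2 \<le> r \<Longrightarrow> r < 1 \<Longrightarrow> (\<Sum>k<K. T r k) \<le> C0 / \<mu> r"
    using gap_derivative_partial_sums[where n = n and a = a,
        OF mu_pos mu_decr B_pos mu_doubling mu_A n_pos lam gap coeff]
    unfolding T_def by blast
  have T_nonneg: "\<And>r k. 0 \<le> r \<Longrightarrow> 0 \<le> T r k" by (simp add: T_def)
  have T_mono: "\<And>r s k. 0 \<le> r \<Longrightarrow> r \<le> s \<Longrightarrow> T r k \<le> T s k"
    unfolding T_def by (intro mult_left_mono power_mono) auto
  show ?thesis
    using weighted_series_bound[OF mu_pos mu_decr T_nonneg T_mono partial] by (simp add: T_def)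
qed

lemma directional_deriv_Re_Im:
  fixes G :: "complex \<Rightarrow> complex"
  assumes "(G has_field_derivative D) (at w)"
  shows "((\<lambda>t::real. Re (G (w + v * of_real t))) has_real_derivative Re (v * D)) (at 0)"
    and "((\<lambda>t::real. Im (G (w + v * of_real t))) has_real_derivative Im (v * D)) (at 0)"
proof -
  have line: "((\<lambda>t::real. w + v * of_real t) has_vector_derivative v) (at 0)"
    by (auto intro!: derivative_eq_intros)
  have "((G \<circ> (\<lambda>t. w + v * of_real t)) has_vector_derivative (v * D)) (at 0)"
    using field_vector_diff_chain_at[OF line] assms by simp
  from has_field_derivative_Re[OF this] has_field_derivative_Im[OF this]
  show "((\<lambda>t::real. Re (G (w + v * of_real t))) has_real_derivative Re (v * D)) (at 0)"
    and "((\<lambda>t::real. Im (G (w + v * of_real t))) has_real_derivative Im (v * D)) (at 0)"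
    by (simp_all add: o_def)
qed

lemma harmonic_Re_holomorphic:
  assumes holo: "F holomorphic_on S" and S: "open S"
  shows "harmonic_on S (\<lambda>z. Re (F z))"
    and "z \<in> S \<Longrightarrow> grad_norm (\<lambda>z. Re (F z)) z = cmod (deriv F z)"
proof -
  define F' where "F' = deriv F"
  define F'' where "F'' = deriv F'"
  have holo': "F' holomorphic_on S" unfolding F'_def using holo S by (rule holomorphic_deriv)
  have holo'': "F'' holomorphic_on S" unfolding F''_def using holo' S by (rule holomorphic_deriv)
  have partials:
    "((\<lambda>t. Re (F (z + of_real t))) has_real_derivative Re (F' z)) (at 0) \<and>
     ((\<lambda>t. Re (F (z + \<i> * of_real t))) has_real_derivative - Im (F' z)) (at 0) \<and>
     ((\<lambda>t. Re (F' (z + of_real t))) has_real_derivative Re (F'' z)) (at 0) \<and>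
     ((\<lambda>t. Re (F' (z + \<i> * of_real t))) has_real_derivative Re (\<i> * F'' z)) (at 0) \<and>
     ((\<lambda>t. - Im (F' (z + of_real t))) has_real_derivative - Im (F'' z)) (at 0) \<and>
     ((\<lambda>t. - Im (F' (z + \<i> * of_real t))) has_real_derivative - Im (\<i> * F'' z)) (at 0) \<and>
     isCont (\<lambda>z. Re (F'' z)) z \<and> isCont (\<lambda>z. Re (\<i> * F'' z)) z \<and>
     isCont (\<lambda>z. - Im (F'' z)) z \<and> isCont (\<lambda>z. - Im (\<i> * F'' z)) z \<and>
     Re (F'' z) + - Im (\<i> * F'' z) = 0" if z: "z \<in> S" for z
  proof -
    have dF: "(F has_field_derivative F' z) (at z)"
      unfolding F'_def using holo S z by (rule holomorphic_derivI)
    have dF': "(F' has_field_derivative F'' z) (at z)"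
      unfolding F''_def using holo' S z by (rule holomorphic_derivI)
    have "isCont F'' z"
      using holomorphic_on_imp_continuous_on[OF holo''] S z by (simp add: continuous_on_eq_continuous_at)
    text \<open>Cauchy-Riemann: u = Re F has partials Re F' and -Im F'; the second partials
      u_xx = Re F'' and u_yy = -Im (i F'') = -Re F'' cancel.\<close>
    then show ?thesis
      using directional_deriv_Re_Im[OF dF, of 1] directional_deriv_Re_Im[OF dF, of \<i>]
        directional_deriv_Re_Im[OF dF', of 1] directional_deriv_Re_Im[OF dF', of \<i>]
      by (auto intro!: continuous_intros DERIV_minus)
  qed
  show "harmonic_on S (\<lambda>z. Re (F z))"
    unfolding harmonic_on_def using S partials by (intro conjI exI ballI) blast+
  show "grad_norm (\<lambda>z. Re (F z)) z = cmod (deriv F z)" if "z \<in> S"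
  proof -
    have "dx (\<lambda>z. Re (F z)) z = Re (F' z)" and "dy (\<lambda>z. Re (F z)) z = - Im (F' z)"
      unfolding dx_def dy_def using partials[OF that] by (blast intro: DERIV_imp_deriv)+
    then show ?thesis unfolding grad_norm_def norm_complex_def F'_def by simp
  qed
qed

lemma Re_holomorphic_in_bloch_mu:
  fixes F :: "complex \<Rightarrow> complex" and \<mu> :: "real \<Rightarrow> real"
  assumes holo: "F holomorphic_on ball 0 1"
    and bound: "\<And>z. cmod z < 1 \<Longrightarrow> \<mu> (cmod z) * cmod (deriv F z) \<le> C"
  shows "(\<lambda>z. Re (F z)) \<in> bloch_mu \<mu>"
  unfolding bloch_mu_def
proof (intro CollectI conjI exI ballI)
  show "harmonic_on (ball 0 1) (\<lambda>z. Re (F z))"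
    using holo by (rule harmonic_Re_holomorphic) simp
  fix z :: complex assume z: "z \<in> ball 0 1"
  then have "grad_norm (\<lambda>z. Re (F z)) z = cmod (deriv F z)"
    using harmonic_Re_holomorphic(2)[OF holo open_ball] by blast
  then show "\<bar>Re (F 0)\<bar> + \<mu> (cmod z) * grad_norm (\<lambda>z. Re (F z)) z \<le> \<bar>Re (F 0)\<bar> + C"
    using bound z by simp
qed

lemma gap_series_holomorphic:
  fixes n :: "nat \<Rightarrow> nat" and a :: "nat \<Rightarrow> complex"
  assumes n: "strict_mono n" and n_pos: "\<And>k. 0 < n k"
    and deriv_summable:
      "\<And>r. 0 \<le> r \<Longrightarrow> r < 1 \<Longrightarrow> summable (\<lambda>k. real (n k) * cmod (a k) * r ^ (n k - 1))"
  defines "F \<equiv> \<lambda>z. \<Sum>k. a k * z ^ n k"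
  shows "\<And>z. cmod z < 1 \<Longrightarrow> summable (\<lambda>k. a k * z ^ n k)"
    and "F holomorphic_on ball 0 1"
    and "\<And>z. cmod z < 1 \<Longrightarrow> cmod (deriv F z) \<le> (\<Sum>k. real (n k) * cmod (a k) * cmod z ^ (n k - 1))"
proof -
  show summable: "summable (\<lambda>k. a k * z ^ n k)" if z: "cmod z < 1" for z
  proof (rule summable_comparison_test')
    show "summable (\<lambda>k. real (n k) * cmod (a k) * cmod z ^ (n k - 1))"
      using deriv_summable z by simp
    fix k
    have "cmod z ^ n k \<le> 1 * cmod z ^ (n k - 1)"
      using z by (simp add: power_decreasing)
    also have "\<dots> \<le> real (n k) * cmod z ^ (n k - 1)"
      using n_pos[of k] by (intro mult_right_mono) auto
    finally have "cmod z ^ n k \<le> real (n k) * cmod z ^ (n k - 1)" .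
    then have "cmod (a k) * cmod z ^ n k \<le> cmod (a k) * (real (n k) * cmod z ^ (n k - 1))"
      by (intro mult_left_mono) auto
    then show "norm (a k * z ^ n k) \<le> real (n k) * cmod (a k) * cmod z ^ (n k - 1)"
      by (simp add: norm_mult norm_power ac_simps)
  qed
  text \<open>View the gap series as the power series with coefficients c supported on range n.\<close>
  define c where "c m = (if m \<in> range n then a (inv n m) else 0)" for m
  have c_n: "c (n k) = a k" for k
    using strict_mono_imp_inj_on[OF n] by (simp add: c_def)
  have c_zero: "c m = 0" if "m \<notin> range n" for m
    using that by (simp add: c_def)
  have F_eq: "F z = (\<Sum>m. c m * z ^ m)" for z
    unfolding F_def using suminf_mono_reindex[OF n, of "\<lambda>m. c m * z ^ m"] c_zero by (simp add: c_n)
  have c_summable: "summable (\<lambda>m. c m * z ^ m)" if "cmod z < 1" for z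
    using summable[OF that] summable_mono_reindex[OF n, of "\<lambda>m. c m * z ^ m"] c_zero
    by (simp add: c_n)
  have F_deriv: "(F has_field_derivative (\<Sum>m. diffs c m * z ^ m)) (at z)" if "cmod z < 1" for z
    unfolding F_eq[abs_def] using termdiffs_strong'[OF c_summable] that by blast
  show "F holomorphic_on ball 0 1"
    unfolding holomorphic_on_open[OF open_ball]
  proof
    fix z :: complex assume "z \<in> ball 0 1"
    then show "\<exists>f'. (F has_field_derivative f') (at z)"
      using F_deriv[of z] by auto
  qed
  show "cmod (deriv F z) \<le> (\<Sum>k. real (n k) * cmod (a k) * cmod z ^ (n k - 1))"
    if z: "cmod z < 1" for z
  proof -
    define e where "e m = of_nat m * c m * z ^ (m - 1)" for m
    have "(\<lambda>m. e (Suc m)) sums deriv F z"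
      using DERIV_imp_deriv[OF F_deriv[OF z]] termdiff_converges[OF z c_summable]
      by (simp add: e_def diffs_def summable_sums)
    then have "e sums deriv F z"
      using sums_Suc_iff[of e] by (simp add: e_def)
    then have e_sums: "(\<lambda>k. e (n k)) sums deriv F z"
      using sums_mono_reindex[OF n, of e] c_zero by (simp add: e_def)
    have e_norm: "norm (e (n k)) = real (n k) * cmod (a k) * cmod z ^ (n k - 1)" for k
      by (simp add: e_def c_n norm_mult norm_power)
    have "cmod (deriv F z) = norm (\<Sum>k. e (n k))"
      by (simp only: sums_unique[OF e_sums])
    also have "\<dots> \<le> (\<Sum>k. norm (e (n k)))"
      using deriv_summable[of "cmod z"] z by (intro summable_norm) (simp add: e_norm)
    finally show ?thesis by (simp add: e_norm)
  qed
qed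

theorem corollary7:
  fixes \<mu> :: "real \<Rightarrow> real" and B lam :: real
    and n :: "nat \<Rightarrow> nat" and a :: "nat \<Rightarrow> complex"
  assumes mu_pos: "\<forall>r\<in>{0..<1}. \<mu> r > 0"
    and mu_decr: "\<forall>r s. 0 \<le> r \<and> r \<le> s \<and> s < 1 \<longrightarrow> \<mu> s \<le> \<mu> r"
    and mu_cont: "continuous_on {0..<1} \<mu>"
    and mu_lim: "(\<mu> \<longlongrightarrow> 0) (at_left 1)"
    and B_pos: "B > 0"
    and mu_doubling: "\<forall>d\<in>{0<..1}. \<mu> (1 - d / 2) \<ge> B * \<mu> (1 - d)"
    and mu_A: "\<forall>q>1. \<exists>A>1. \<exists>y0. \<forall>y>y0. \<forall>x>q*y. \<mu> (1 - 1/y) > A * \<mu> (1 - 1/x)"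
    and n_pos: "\<forall>k. n k > 0"
    and lam: "lam > 1"
    and gap: "\<forall>k. real (n (Suc k)) \<ge> lam * real (n k)"
    and coeff: "bdd_above (range (\<lambda>k. real (n k) * cmod (a k) * \<mu> (1 - 1 / real (n k))))"
  shows "(\<forall>z\<in>ball 0 1. summable (\<lambda>k. a k * z ^ n k)) \<and>
         (\<lambda>z. Re (\<Sum>k. a k * z ^ n k)) \<in> bloch_mu \<mu>"
proof -
  define T where "T r k = real (n k) * cmod (a k) * r ^ (n k - 1)" for r k
  have n_pos': "\<And>k. 0 < n k" and gap': "\<And>k. lam * real (n k) \<le> real (n (Suc k))"
    using n_pos gap by auto
  obtain M where "\<And>k. real (n k) * cmod (a k) * \<mu> (1 - 1 / real (n k)) \<le> M"
    using coeff by (auto simp: bdd_above_def)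
  from gap_derivative_series_bound[where n = n and a = a,
      OF mu_pos mu_decr B_pos mu_doubling mu_A n_pos' lam gap' this]
  obtain C where C: "\<forall>r. 0 \<le> r \<and> r < 1 \<longrightarrow> summable (T r) \<and> \<mu> r * suminf (T r) \<le> C"
    unfolding T_def by blast
  have strict: "strict_mono n" using n_pos' lam gap' by (rule lacunary_strict_mono)
  note gap_series = gap_series_holomorphic[OF strict n_pos', of a, folded T_def]
  have "\<mu> (cmod z) * cmod (deriv (\<lambda>z. \<Sum>k. a k * z ^ n k) z) \<le> C" if "cmod z < 1" for z
  proof -
    have "\<mu> (cmod z) * cmod (deriv (\<lambda>z. \<Sum>k. a k * z ^ n k) z) \<le> \<mu> (cmod z) * suminf (T (cmod z))"
      using gap_series(3) C mu_pos that by (intro mult_left_mono) (auto simp: less_imp_le)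
    also have "\<dots> \<le> C" using C that by simp
    finally show ?thesis .
  qed
  then show ?thesis
    using gap_series(1,2) C by (auto intro!: Re_holomorphic_in_bloch_mu)
qed

end
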